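(* Let $R>0$ and positive integers $d,k,T$. Consider the contextual combinatorial semi-bandit instance with $N=k2^d$ arms in which, for every $t\in[T]$ and every $s\in[k]$, the feature vectors $\{x_t(i)\}_{i=(s-1)2^d+1}^{s2^d}$ enumerate the $2^d$ vertices $\{-1,1\}^d$, the feasible family is $S_t=\{I\subseteq[k2^d]:|I|=k\}$, and the noises $\eta_t(i)\sim\mathcal{N}(0,R^2)$ are independent. Let $\Theta=\{-R/\sqrt{kT},\,R/\sqrt{kT}\}^d$. Then for any algorithm there exists $\theta^*\in\Theta$ such that $R(T)=\Omega(Rd\sqrt{kT})$.
   Context: In each round $t\in[T]$ the learner observes the feature vectors $x_t(i)$ and $S_t$, chooses $I_t\in S_t$, and observes rewards $r_t(i)={\theta^*}^\top x_t(i)+\eta_t(i)$ for $i\in I_t$. The (expected) regret is $R(T)=\sum_{t=1}^T\big(\sum_{i\in I_t^*}{\theta^*}^\top x_t(i)-\sum_{i\in I_t}{\theta^*}^\top x_t(i)\big)$ with $I_t^*\in\arg\max_{I\in S_t}\sum_{i\in I}{\theta^*}^\top x_t(i)$. *)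

theory Defs
  imports "HOL-Probability.Probability"
begin

text \<open>Conventions: rounds are indexed by t in {0..<T}, arms by i in {0..<k*2^d},
  coordinates by j in {0..<d}. Vectors in R^d are functions nat => real that vanish
  outside {0..<d}. Arm s*2^d + j (s < k, j < 2^d) is the j-th arm of block s.\<close>

definition cube :: "nat \<Rightarrow> (nat \<Rightarrow> real) set" where
  "cube d = {v. (\<forall>j<d. v j = -1 \<or> v j = 1) \<and> (\<forall>j\<ge>d. v j = 0)}"

definition Theta :: "real \<Rightarrow> nat \<Rightarrow> nat \<Rightarrow> nat \<Rightarrow> (nat \<Rightarrow> real) set" where
  "Theta R d k T = {\<theta>. (\<forall>j<d. \<theta> j = - (R / sqrt (real k * real T)) \<or> \<theta> j = R / sqrt (real k * real T))
                     \<and> (\<forall>j\<ge>d. \<theta> j = 0)}"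

definition inst_features :: "nat \<Rightarrow> nat \<Rightarrow> nat \<Rightarrow> (nat \<Rightarrow> nat \<Rightarrow> nat \<Rightarrow> real) \<Rightarrow> bool" where
  "inst_features d k T x \<longleftrightarrow>
     (\<forall>t<T. \<forall>s<k. bij_betw (\<lambda>j. x t (s * 2^d + j)) {..<2^d} (cube d))"

definition feasible :: "nat \<Rightarrow> nat \<Rightarrow> nat set set" where
  "feasible N k = {I. I \<subseteq> {..<N} \<and> card I = k}"

definition mean_reward :: "(nat \<Rightarrow> real) \<Rightarrow> nat \<Rightarrow> (nat \<Rightarrow> nat \<Rightarrow> nat \<Rightarrow> real) \<Rightarrow> nat \<Rightarrow> nat \<Rightarrow> real" where
  "mean_reward \<theta> d x t i = (\<Sum>j<d. \<theta> j * x t i j)"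

text \<open>A history is the list of past (chosen set, observed rewards) pairs; the observed
  reward function is masked to 0 outside the chosen set.\<close>
type_synonym history = "(nat set \<times> (nat \<Rightarrow> real)) list"

text \<open>A (possibly randomised) policy: internal random seed u, round t, history \<Rightarrow> chosen set.
  The noise eta (t,i) is pre-sampled for all rounds and arms; only the entries of
  chosen arms are revealed.\<close>
fun hist :: "(real \<Rightarrow> nat \<Rightarrow> history \<Rightarrow> nat set) \<Rightarrow> (nat \<Rightarrow> real) \<Rightarrow> nat
      \<Rightarrow> (nat \<Rightarrow> nat \<Rightarrow> nat \<Rightarrow> real) \<Rightarrow> real \<Rightarrow> (nat \<times> nat \<Rightarrow> real) \<Rightarrow> nat \<Rightarrow> history" where
  "hist \<pi> \<theta> d x u \<eta> 0 = []"
| "hist \<pi> \<theta> d x u \<eta> (Suc t) =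
     (let h = hist \<pi> \<theta> d x u \<eta> t; I = \<pi> u t h
      in h @ [(I, \<lambda>i. if i \<in> I then mean_reward \<theta> d x t i + \<eta> (t, i) else 0)])"

definition chosen :: "(real \<Rightarrow> nat \<Rightarrow> history \<Rightarrow> nat set) \<Rightarrow> (nat \<Rightarrow> real) \<Rightarrow> nat
      \<Rightarrow> (nat \<Rightarrow> nat \<Rightarrow> nat \<Rightarrow> real) \<Rightarrow> real \<Rightarrow> (nat \<times> nat \<Rightarrow> real) \<Rightarrow> nat \<Rightarrow> nat set" where
  "chosen \<pi> \<theta> d x u \<eta> t = \<pi> u t (hist \<pi> \<theta> d x u \<eta> t)"

definition sample_space :: "real measure \<Rightarrow> real \<Rightarrow> nat \<Rightarrow> nat \<Rightarrow> (real \<times> (nat \<times> nat \<Rightarrow> real)) measure" where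
  "sample_space U R T N =
     U \<Otimes>\<^sub>M (PiM ({..<T} \<times> {..<N}) (\<lambda>_. density lborel (normal_density 0 R)))"

definition regret :: "(real \<Rightarrow> nat \<Rightarrow> history \<Rightarrow> nat set) \<Rightarrow> (nat \<Rightarrow> real) \<Rightarrow> nat \<Rightarrow> nat
      \<Rightarrow> (nat \<Rightarrow> nat \<Rightarrow> nat \<Rightarrow> real) \<Rightarrow> real \<Rightarrow> (nat \<times> nat \<Rightarrow> real) \<Rightarrow> nat \<Rightarrow> real" where
  "regret \<pi> \<theta> d k x u \<eta> T =
     (\<Sum>t<T. Max ((\<lambda>I. \<Sum>i\<in>I. mean_reward \<theta> d x t i) ` feasible (k * 2^d) k)
            - (\<Sum>i\<in>chosen \<pi> \<theta> d x u \<eta> t. mean_reward \<theta> d x t i))"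

definition expected_regret :: "real measure \<Rightarrow> real \<Rightarrow> (real \<Rightarrow> nat \<Rightarrow> history \<Rightarrow> nat set)
      \<Rightarrow> (nat \<Rightarrow> real) \<Rightarrow> nat \<Rightarrow> nat \<Rightarrow> (nat \<Rightarrow> nat \<Rightarrow> nat \<Rightarrow> real) \<Rightarrow> nat \<Rightarrow> real" where
  "expected_regret U R \<pi> \<theta> d k x T =
     (\<integral>\<omega>. regret \<pi> \<theta> d k x (fst \<omega>) (snd \<omega>) T \<partial>(sample_space U R T (k * 2^d)))"

end

theory Submission
  imports Defs
begin

text \<open>
  Put \<open>\<Delta> = R / sqrt (k T)\<close>. Up to a nonnegative term, the regret of a round is \<open>2 \<Delta>\<close> times the
  number of pairs (chosen arm, coordinate \<open>j\<close>) for which the \<open>j\<close>-th feature of the arm has the sign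
  opposite to \<open>\<theta> j\<close>. Flipping \<open>\<theta> j\<close> changes the mean reward of every arm by \<open>\<plusminus>2 \<Delta>\<close>; subtracting
  this change from the noise of the arms the learner chooses turns the observations under \<open>\<theta>\<close> into
  those under the flipped parameter. By the Gaussian change of measure this adaptive shift costs a
  likelihood ratio whose second moment is \<open>exp (4 \<Delta>\<^sup>2 k T / R\<^sup>2) = e\<^sup>4\<close>, so the learner cannot get
  the sign of coordinate \<open>j\<close> right under both parameters: the two expected numbers of wrong signs
  sum to at least \<open>k / (2 e\<^sup>4)\<close> per round. Summing over rounds and coordinates and averaging over
  \<open>\<Theta>\<close>, whose elements pair up under the flip, gives an average regret of at least
  \<open>R d sqrt (k T) / (2 e\<^sup>4)\<close>.
\<close>

lemma mult_le_amgm_unit: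
  fixes g L E :: real
  assumes "0 \<le> g" "g \<le> 1" "E > 0"
  shows "g * L \<le> E / 2 * g + L\<^sup>2 / (2 * E)"
proof -
  have "0 \<le> (E * g - L)\<^sup>2 / (2 * E)"
    using assms(3) by simp
  then have "g * L \<le> E / 2 * g\<^sup>2 + L\<^sup>2 / (2 * E)"
    using assms(3) by (simp add: field_simps power2_eq_square)
  moreover have "E / 2 * g\<^sup>2 \<le> E / 2 * g"
    using assms by (intro mult_left_mono) (auto simp: power2_eq_square mult_left_le)
  ultimately show ?thesis
    by linarith
qed

lemma pair_error_lower_bound:
  fixes A B E :: real
  assumes "0 \<le> A" "B \<le> 1" "B \<le> E / 2 * A + 1 / 2" "E \<ge> 2"
  shows "1 / (2 * E) \<le> A + (1 - B)"
proof (cases "1 / (2 * E) \<le> A")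
  case False
  then have "E / 2 * A \<le> 1 / 4"
    using assms(4) by (simp add: field_simps)
  moreover have "1 / (2 * E) \<le> 1 / 4"
    using assms(4) by (simp add: field_simps)
  ultimately show ?thesis
    using assms(1,3) by linarith
qed (use assms(2) in simp)

lemma sum_ge_by_involution:
  fixes f :: "'a \<Rightarrow> real"
  assumes "finite A" "\<And>a. a \<in> A \<Longrightarrow> \<sigma> a \<in> A" "\<And>a. a \<in> A \<Longrightarrow> \<sigma> (\<sigma> a) = a"
    and pair: "\<And>a. a \<in> A \<Longrightarrow> m \<le> f a + f (\<sigma> a)"
  shows "real (card A) * m \<le> 2 * sum f A"
proof -
  have "bij_betw \<sigma> A A"
    by (rule bij_betw_byWitness[where f'=\<sigma>]) (use assms(2,3) in auto)
  then have "sum (\<lambda>a. f (\<sigma> a)) A = sum f A"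
    by (rule sum.reindex_bij_betw)
  then have "2 * sum f A = (\<Sum>a\<in>A. f a + f (\<sigma> a))"
    by (simp add: sum.distrib)
  moreover have "(\<Sum>a\<in>A. m) \<le> (\<Sum>a\<in>A. f a + f (\<sigma> a))"
    by (rule sum_mono) (rule pair)
  ultimately show ?thesis
    by simp
qed

lemma exists_ge_of_sum_ge:
  fixes f :: "'a \<Rightarrow> real"
  assumes "finite A" "A \<noteq> {}" "real (card A) * m \<le> sum f A"
  shows "\<exists>a\<in>A. m \<le> f a"
proof (rule ccontr)
  assume "\<not> ?thesis"
  then have "sum f A < sum (\<lambda>_. m) A"
    using assms(1,2) by (intro sum_strict_mono) auto
  then show False
    using assms(3) by simp
qed

lemma (in prob_space) nn_integral_eq_integral_bounded:
  assumes "f \<in> borel_measurable M" "\<And>x. 0 \<le> f x" "\<And>x. f x \<le> B"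
  shows "integrable M f" and "(\<integral>\<^sup>+x. ennreal (f x) \<partial>M) = ennreal (\<integral>x. f x \<partial>M)"
proof -
  show int: "integrable M f"
    by (rule integrable_const_bound[where B=B]) (use assms in auto)
  show "(\<integral>\<^sup>+x. ennreal (f x) \<partial>M) = ennreal (\<integral>x. f x \<partial>M)"
    by (rule nn_integral_eq_integral[OF int]) (use assms in auto)
qed

section \<open>Gaussian change of measure\<close>

definition gaussian :: "real \<Rightarrow> real measure" where
  "gaussian R = density lborel (normal_density 0 R)"

lemma prob_space_gaussian: "R > 0 \<Longrightarrow> prob_space (gaussian R)"
  unfolding gaussian_def by (rule prob_space_normal_density)

lemma space_gaussian[simp]: "space (gaussian R) = UNIV"
  unfolding gaussian_def by simp

lemma sets_gaussian[simp]: "sets (gaussian R) = sets borel"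
  unfolding gaussian_def by simp

lemma measurable_gaussian[simp]: "measurable M (gaussian R) = borel_measurable M"
  by (rule measurable_cong_sets) simp_all

lemma prob_space_PiM_gaussian: "R > 0 \<Longrightarrow> prob_space (PiM I (\<lambda>_. gaussian R))"
  by (intro prob_space_PiM prob_space_gaussian)

lemma borel_measurable_component_gaussian:
  "x \<in> I \<Longrightarrow> (\<lambda>\<eta>. \<eta> x) \<in> borel_measurable (PiM I (\<lambda>_. gaussian R))"
  using measurable_component_singleton[of x I "\<lambda>_. gaussian R"] by simp

definition gauss_ratio :: "real \<Rightarrow> real \<Rightarrow> real \<Rightarrow> real" where
  "gauss_ratio R c y = exp ((2 * c * y - c\<^sup>2) / (2 * R\<^sup>2))"

lemma gauss_ratio_pos: "gauss_ratio R c y > 0"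
  unfolding gauss_ratio_def by simp

lemma borel_measurable_gauss_ratio[measurable]:
  assumes [measurable]: "f \<in> borel_measurable M"
  shows "(\<lambda>\<omega>. gauss_ratio R c (f \<omega>)) \<in> borel_measurable M"
  unfolding gauss_ratio_def by measurable

lemma normal_density_mult_gauss_ratio:
  assumes "R > 0"
  shows "normal_density 0 R y * gauss_ratio R c y = normal_density 0 R (y - c)"
proof -
  have "- y\<^sup>2 / (2 * R\<^sup>2) + (2 * c * y - c\<^sup>2) / (2 * R\<^sup>2) = - (y - c)\<^sup>2 / (2 * R\<^sup>2)"
    using assms by (simp add: field_simps power2_eq_square)
  then show ?thesis
    unfolding normal_density_def gauss_ratio_def by (simp add: mult.assoc exp_add[symmetric])
qed

lemma gauss_ratio_square:
  assumes "R > 0"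
  shows "(gauss_ratio R c y)\<^sup>2 = gauss_ratio R (2 * c) y * exp (c\<^sup>2 / R\<^sup>2)"
proof -
  have "2 * ((2 * c * y - c\<^sup>2) / (2 * R\<^sup>2)) = (2 * (2 * c) * y - (2 * c)\<^sup>2) / (2 * R\<^sup>2) + c\<^sup>2 / R\<^sup>2"
    using assms by (simp add: field_simps power2_eq_square)
  then show ?thesis
    unfolding gauss_ratio_def by (simp add: exp_double[symmetric] exp_add[symmetric])
qed

lemma nn_integral_gaussian_shift:
  fixes g :: "real \<Rightarrow> ennreal"
  assumes R: "R > 0" and [measurable]: "g \<in> borel_measurable borel"
  shows "(\<integral>\<^sup>+y. g (y - c) * ennreal (gauss_ratio R c y) \<partial>gaussian R) = integral\<^sup>N (gaussian R) g"
proof -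
  have "(\<integral>\<^sup>+y. g (y - c) * ennreal (gauss_ratio R c y) \<partial>gaussian R)
      = (\<integral>\<^sup>+y. ennreal (normal_density 0 R (y - c)) * g (y - c) \<partial>lborel)"
    unfolding gaussian_def
    by (subst nn_integral_density)
      (auto intro!: nn_integral_cong simp: normal_density_mult_gauss_ratio[OF R, symmetric]
         ennreal_mult' mult_ac)
  also have "\<dots> = (\<integral>\<^sup>+y. ennreal (normal_density 0 R y) * g y \<partial>lborel)"
    using nn_integral_real_affine[of "\<lambda>y. ennreal (normal_density 0 R y) * g y" 1 "- c"] by simp
  also have "\<dots> = integral\<^sup>N (gaussian R) g"
    unfolding gaussian_def by (subst nn_integral_density) auto
  finally show ?thesis .
qed

definition cond_shift ::
    "'i set \<Rightarrow> ('i \<Rightarrow> ('i \<Rightarrow> real) \<Rightarrow> bool) \<Rightarrow> ('i \<Rightarrow> real) \<Rightarrow> ('i \<Rightarrow> real) \<Rightarrow> 'i \<Rightarrow> real" where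
  "cond_shift J b c \<eta> = (\<lambda>x. if x \<in> J \<and> b x \<eta> then \<eta> x - c x else \<eta> x)"

definition shift_lr ::
    "real \<Rightarrow> 'i set \<Rightarrow> ('i \<Rightarrow> ('i \<Rightarrow> real) \<Rightarrow> bool) \<Rightarrow> ('i \<Rightarrow> real) \<Rightarrow> ('i \<Rightarrow> real) \<Rightarrow> real" where
  "shift_lr R J b c \<eta> = (\<Prod>x\<in>J. if b x \<eta> then gauss_ratio R (c x) (\<eta> x) else 1)"

text \<open>A discrete Girsanov formula for the conditional shift.\<close>
definition shift_preserving :: "('i \<Rightarrow> real) measure \<Rightarrow> real \<Rightarrow> 'i set
    \<Rightarrow> ('i \<Rightarrow> ('i \<Rightarrow> real) \<Rightarrow> bool) \<Rightarrow> ('i \<Rightarrow> real) \<Rightarrow> bool" where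
  "shift_preserving P R J b c \<longleftrightarrow> (\<forall>F\<in>borel_measurable P.
     (\<integral>\<^sup>+\<eta>. F (cond_shift J b c \<eta>) * ennreal (shift_lr R J b c \<eta>) \<partial>P) = integral\<^sup>N P F)"

lemma cond_shift_outside[simp]: "y \<notin> J \<Longrightarrow> cond_shift J b c \<eta> y = \<eta> y"
  unfolding cond_shift_def by simp

lemma cond_shift_singleton: "cond_shift {a} b c \<eta> = (if b a \<eta> then \<eta>(a := \<eta> a - c a) else \<eta>)"
  unfolding cond_shift_def by (auto simp: fun_eq_iff)

lemma shift_lr_singleton:
  "shift_lr R {a} b c \<eta> = (if b a \<eta> then gauss_ratio R (c a) (\<eta> a) else 1)"
  unfolding shift_lr_def by simp

lemma shift_lr_pos: "shift_lr R J b c \<eta> > 0"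
  unfolding shift_lr_def by (rule prod_pos) (simp add: gauss_ratio_pos)

lemma shift_preserving_empty: "shift_preserving P R {} b c"
  unfolding shift_preserving_def cond_shift_def shift_lr_def by simp

lemma measurable_cond_shift:
  assumes J_sub: "J \<subseteq> I"
    and b_meas: "\<And>x. x \<in> J \<Longrightarrow> {\<eta> \<in> space (PiM I (\<lambda>_. gaussian R)). b x \<eta>} \<in> sets (PiM I (\<lambda>_. gaussian R))"
  shows "cond_shift J b c \<in> measurable (PiM I (\<lambda>_. gaussian R)) (PiM I (\<lambda>_. gaussian R))"
proof -
  have "(\<lambda>\<eta> x. if x \<in> J \<and> b x \<eta> then \<eta> x - c x else \<eta> x)
      \<in> measurable (PiM I (\<lambda>_. gaussian R)) (PiM I (\<lambda>_. gaussian R))"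
  proof (rule measurable_PiM_single')
    fix x assume x: "x \<in> I"
    note [measurable] = borel_measurable_component_gaussian[OF x]
    show "(\<lambda>\<eta>. if x \<in> J \<and> b x \<eta> then \<eta> x - c x else \<eta> x) \<in> measurable (PiM I (\<lambda>_. gaussian R)) (gaussian R)"
      using b_meas by (cases "x \<in> J") (auto intro!: measurable_If)
  qed (use J_sub in \<open>auto simp: space_PiM PiE_def extensional_def\<close>)
  then show ?thesis
    unfolding cond_shift_def[abs_def] .
qed

lemma borel_measurable_shift_lr:
  assumes J_sub: "J \<subseteq> I"
    and b_meas: "\<And>x. x \<in> J \<Longrightarrow> {\<eta> \<in> space (PiM I (\<lambda>_. gaussian R)). b x \<eta>} \<in> sets (PiM I (\<lambda>_. gaussian R))"
  shows "shift_lr R J b c \<in> borel_measurable (PiM I (\<lambda>_. gaussian R))"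
  unfolding shift_lr_def[abs_def]
proof (rule borel_measurable_prod)
  fix x assume x: "x \<in> J"
  note [measurable] = borel_measurable_component_gaussian[of x I R]
  show "(\<lambda>\<eta>. if b x \<eta> then gauss_ratio R (c x) (\<eta> x) else 1) \<in> borel_measurable (PiM I (\<lambda>_. gaussian R))"
    using x J_sub b_meas[OF x] by (auto intro!: measurable_If)
qed

lemma shift_preserving_singleton:
  fixes I :: "'i set" and R :: real
  defines "P \<equiv> PiM I (\<lambda>_. gaussian R)"
  assumes R: "R > 0" and fin: "finite I" and aI: "a \<in> I"
    and b_indep: "\<And>\<eta> z. b a (\<eta>(a := z)) = b a \<eta>"
    and b_meas: "{\<eta> \<in> space P. b a \<eta>} \<in> sets P"
  shows "shift_preserving P R {a} b c"
  unfolding shift_preserving_def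
proof
  fix F :: "('i \<Rightarrow> real) \<Rightarrow> ennreal" assume F: "F \<in> borel_measurable P"
  interpret product_sigma_finite "\<lambda>_::'i. gaussian R"
    unfolding product_sigma_finite_def
    using prob_space_gaussian[OF R] prob_space_imp_sigma_finite by blast
  define J where "J = I - {a}"
  have I: "I = insert a J" "finite J" "a \<notin> J"
    using aI fin unfolding J_def by auto
  have [measurable]: "F \<in> borel_measurable (PiM (insert a J) (\<lambda>_. gaussian R))"
    using F unfolding P_def I(1) .
  have a_sub: "{a} \<subseteq> I" and a_meas: "\<And>x. x \<in> {a} \<Longrightarrow> {\<eta> \<in> space P. b x \<eta>} \<in> sets P"
    using aI b_meas by auto
  have [measurable]: "(\<lambda>\<eta>. F (cond_shift {a} b c \<eta>) * ennreal (shift_lr R {a} b c \<eta>))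
      \<in> borel_measurable (PiM (insert a J) (\<lambda>_. gaussian R))"
    using measurable_cond_shift[OF a_sub a_meas[unfolded P_def], where c=c]
      borel_measurable_shift_lr[OF a_sub a_meas[unfolded P_def], where c=c] F
    unfolding P_def I(1)[symmetric] by measurable
  have "(\<integral>\<^sup>+\<eta>. F (cond_shift {a} b c \<eta>) * ennreal (shift_lr R {a} b c \<eta>) \<partial>P)
      = (\<integral>\<^sup>+\<xi>. \<integral>\<^sup>+y. F (cond_shift {a} b c (\<xi>(a := y))) * ennreal (shift_lr R {a} b c (\<xi>(a := y)))
           \<partial>gaussian R \<partial>PiM J (\<lambda>_. gaussian R))"
    unfolding P_def I(1) by (rule product_nn_integral_insert) (use I in auto)
  also have "\<dots> = (\<integral>\<^sup>+\<xi>. \<integral>\<^sup>+y. F (\<xi>(a := y)) \<partial>gaussian R \<partial>PiM J (\<lambda>_. gaussian R))"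
  proof (rule nn_integral_cong)
    fix \<xi> assume \<xi>: "\<xi> \<in> space (PiM J (\<lambda>_. gaussian R))"
    have "(\<lambda>y. F (\<xi>(a := y))) \<in> borel_measurable (gaussian R)"
      using measurable_comp[OF measurable_component_update[OF \<xi> I(3)], of F] by (simp add: comp_def)
    then have "(\<lambda>y. F (\<xi>(a := y))) \<in> borel_measurable borel"
      unfolding measurable_cong_sets[OF sets_gaussian refl] .
    then show "(\<integral>\<^sup>+y. F (cond_shift {a} b c (\<xi>(a := y))) * ennreal (shift_lr R {a} b c (\<xi>(a := y))) \<partial>gaussian R)
        = (\<integral>\<^sup>+y. F (\<xi>(a := y)) \<partial>gaussian R)"
      using nn_integral_gaussian_shift[OF R, of "\<lambda>y. F (\<xi>(a := y))" "c a"]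
      by (cases "b a \<xi>") (simp_all add: cond_shift_singleton shift_lr_singleton b_indep)
  qed
  also have "\<dots> = integral\<^sup>N P F"
    unfolding P_def I(1) by (rule product_nn_integral_insert[symmetric]) (use I in auto)
  finally show "(\<integral>\<^sup>+\<eta>. F (cond_shift {a} b c \<eta>) * ennreal (shift_lr R {a} b c \<eta>) \<partial>P) = integral\<^sup>N P F" .
qed

lemma cond_shift_cond_shift:
  assumes "J \<inter> K = {}" and "\<And>x. x \<in> J \<Longrightarrow> b x (cond_shift K b c \<eta>) = b x \<eta>"
  shows "cond_shift J b c (cond_shift K b c \<eta>) = cond_shift (J \<union> K) b c \<eta>"
  using assms unfolding cond_shift_def by (auto simp: fun_eq_iff)

lemma shift_lr_cond_shift:
  assumes "finite J" "finite K" "J \<inter> K = {}" and "\<And>x. x \<in> J \<Longrightarrow> b x (cond_shift K b c \<eta>) = b x \<eta>"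
  shows "shift_lr R J b c (cond_shift K b c \<eta>) * shift_lr R K b c \<eta> = shift_lr R (J \<union> K) b c \<eta>"
proof -
  have "shift_lr R J b c (cond_shift K b c \<eta>) = shift_lr R J b c \<eta>"
    unfolding shift_lr_def using assms(3,4) by (intro prod.cong) (auto simp: disjoint_iff)
  then show ?thesis
    unfolding shift_lr_def using assms(1-3) by (simp add: prod.union_disjoint)
qed

lemma shift_preserving_Un:
  fixes I :: "'i set" and R :: real
  defines "P \<equiv> PiM I (\<lambda>_. gaussian R)"
  assumes J: "shift_preserving P R J b c" and K: "shift_preserving P R K b c"
    and fin: "finite J" "finite K" and disj: "J \<inter> K = {}" and JI: "J \<subseteq> I"
    and b_meas: "\<And>x. x \<in> J \<Longrightarrow> {\<eta> \<in> space P. b x \<eta>} \<in> sets P"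
    and b_indep: "\<And>\<eta> x. x \<in> J \<Longrightarrow> b x (cond_shift K b c \<eta>) = b x \<eta>"
  shows "shift_preserving P R (J \<union> K) b c"
  unfolding shift_preserving_def
proof
  fix F :: "('i \<Rightarrow> real) \<Rightarrow> ennreal" assume F: "F \<in> borel_measurable P"
  define G where "G \<xi> = F (cond_shift J b c \<xi>) * ennreal (shift_lr R J b c \<xi>)" for \<xi>
  have "G \<in> borel_measurable P"
    using measurable_cond_shift[OF JI b_meas[unfolded P_def], where c=c]
      borel_measurable_shift_lr[OF JI b_meas[unfolded P_def], where c=c] F
    unfolding G_def P_def by measurable
  have "(\<integral>\<^sup>+\<eta>. F (cond_shift (J \<union> K) b c \<eta>) * ennreal (shift_lr R (J \<union> K) b c \<eta>) \<partial>P)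
      = (\<integral>\<^sup>+\<eta>. G (cond_shift K b c \<eta>) * ennreal (shift_lr R K b c \<eta>) \<partial>P)"
    using cond_shift_cond_shift[OF disj b_indep] shift_lr_cond_shift[OF fin disj b_indep]
    by (simp add: G_def mult.assoc ennreal_mult'[symmetric] shift_lr_pos less_imp_le)
  also have "\<dots> = integral\<^sup>N P G"
    using K \<open>G \<in> borel_measurable P\<close> unfolding shift_preserving_def by blast
  also have "\<dots> = integral\<^sup>N P F"
    using J F unfolding shift_preserving_def G_def by blast
  finally show "(\<integral>\<^sup>+\<eta>. F (cond_shift (J \<union> K) b c \<eta>) * ennreal (shift_lr R (J \<union> K) b c \<eta>) \<partial>P)
      = integral\<^sup>N P F" .
qed

lemma shift_preserving_independent:
  fixes I :: "'i set" and R :: real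
  defines "P \<equiv> PiM I (\<lambda>_. gaussian R)"
  assumes R: "R > 0" and fin: "finite I" and JI: "J \<subseteq> I"
    and b_indep: "\<And>x \<eta> \<eta>'. x \<in> J \<Longrightarrow> (\<And>y. y \<notin> J \<Longrightarrow> \<eta> y = \<eta>' y) \<Longrightarrow> b x \<eta> = b x \<eta>'"
    and b_meas: "\<And>x. x \<in> J \<Longrightarrow> {\<eta> \<in> space P. b x \<eta>} \<in> sets P"
  shows "shift_preserving P R J b c"
  using finite_subset[OF JI fin] JI b_indep b_meas
proof (induction J)
  case empty
  show ?case
    by (rule shift_preserving_empty)
next
  case (insert a J)
  note JI = insert.prems(1) and b_indep = insert.prems(2) and b_meas = insert.prems(3)
  have "shift_preserving P R ({a} \<union> J) b c"
    unfolding P_def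
  proof (rule shift_preserving_Un)
    show "shift_preserving (PiM I (\<lambda>_. gaussian R)) R {a} b c"
    proof (rule shift_preserving_singleton[OF R fin])
      show "a \<in> I"
        using JI by simp
      show "b a (\<eta>(a := z)) = b a \<eta>" for \<eta> z
        by (rule b_indep) auto
      show "{\<eta> \<in> space (PiM I (\<lambda>_. gaussian R)). b a \<eta>} \<in> sets (PiM I (\<lambda>_. gaussian R))"
        using b_meas[of a] unfolding P_def by simp
    qed
    have "shift_preserving P R J b c"
    proof (rule insert.IH)
      show "b x \<eta> = b x \<eta>'" if "x \<in> J" "\<And>y. y \<notin> J \<Longrightarrow> \<eta> y = \<eta>' y" for x \<eta> \<eta>'
        by (rule b_indep) (use that in auto)
    qed (use JI b_meas in auto)
    then show "shift_preserving (PiM I (\<lambda>_. gaussian R)) R J b c"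
      unfolding P_def .
    show "b x (cond_shift J b c \<eta>) = b x \<eta>" if "x \<in> {a}" for x \<eta>
      by (rule b_indep) (use that in auto)
    show "{\<eta> \<in> space (PiM I (\<lambda>_. gaussian R)). b x \<eta>} \<in> sets (PiM I (\<lambda>_. gaussian R))"
      if "x \<in> {a}" for x
      using b_meas[of a] that unfolding P_def by simp
  qed (use insert.hyps JI in auto)
  then show ?case
    by simp
qed

definition selected :: "(('i \<Rightarrow> real) \<Rightarrow> nat \<Rightarrow> 'a set) \<Rightarrow> nat \<times> 'a \<Rightarrow> ('i \<Rightarrow> real) \<Rightarrow> bool" where
  "selected S p \<eta> \<longleftrightarrow> snd p \<in> S \<eta> (fst p)"

lemma sets_selected:
  assumes "(\<lambda>\<eta>. S \<eta> t) \<in> measurable M (count_space UNIV)"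
  shows "{\<eta> \<in> space M. selected S (t, i) \<eta>} \<in> sets M"
  using measurable_sets[OF assms, of "{B. i \<in> B}"] by (simp add: selected_def vimage_def Int_def conj_commute)

lemma shift_preserving_round:
  fixes T :: nat and A :: "'a set" and R :: real and S :: "(nat \<times> 'a \<Rightarrow> real) \<Rightarrow> nat \<Rightarrow> 'a set"
  defines "P \<equiv> PiM ({..<T} \<times> A) (\<lambda>_. gaussian R)"
  assumes R: "R > 0" and A: "finite A"
    and S_adapt: "\<And>t \<eta> \<eta>'. (\<And>s i. s < t \<Longrightarrow> \<eta> (s, i) = \<eta>' (s, i)) \<Longrightarrow> S \<eta> t = S \<eta>' t"
    and S_meas: "\<And>t. t < T \<Longrightarrow> (\<lambda>\<eta>. S \<eta> t) \<in> measurable P (count_space UNIV)"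
    and n: "n < T"
  shows "shift_preserving P R ({n} \<times> A) (selected S) c"
  unfolding P_def
proof (rule shift_preserving_independent[OF R])
  show "{n} \<times> A \<subseteq> {..<T} \<times> A"
    using n by auto
  show "selected S p \<eta> = selected S p \<eta>'"
    if "p \<in> {n} \<times> A" "\<And>q. q \<notin> {n} \<times> A \<Longrightarrow> \<eta> q = \<eta>' q" for p \<eta> \<eta>'
  proof -
    have "S \<eta> n = S \<eta>' n"
      by (rule S_adapt) (use that(2) in simp)
    then show ?thesis
      unfolding selected_def using that(1) by auto
  qed
  show "{\<eta> \<in> space (PiM ({..<T} \<times> A) (\<lambda>_. gaussian R)). selected S p \<eta>}
      \<in> sets (PiM ({..<T} \<times> A) (\<lambda>_. gaussian R))" if "p \<in> {n} \<times> A" for p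
    using sets_selected[where S=S and t=n and M=P and i="snd p"] S_meas[OF n] that
    unfolding P_def by auto
qed (use A in simp)

lemma shift_preserving_adaptive:
  fixes T :: nat and A :: "'a set" and R :: real and S :: "(nat \<times> 'a \<Rightarrow> real) \<Rightarrow> nat \<Rightarrow> 'a set"
  defines "P \<equiv> PiM ({..<T} \<times> A) (\<lambda>_. gaussian R)"
  assumes R: "R > 0" and A: "finite A"
    and S_adapt: "\<And>t \<eta> \<eta>'. (\<And>s i. s < t \<Longrightarrow> \<eta> (s, i) = \<eta>' (s, i)) \<Longrightarrow> S \<eta> t = S \<eta>' t"
    and S_meas: "\<And>t. t < T \<Longrightarrow> (\<lambda>\<eta>. S \<eta> t) \<in> measurable P (count_space UNIV)"
    and n: "n \<le> T"
  shows "shift_preserving P R ({..<n} \<times> A) (selected S) c"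
  using n
proof (induction n)
  case 0
  then show ?case
    using shift_preserving_empty by simp
next
  case (Suc n)
  have "shift_preserving P R ({..<n} \<times> A \<union> {n} \<times> A) (selected S) c"
    unfolding P_def
  proof (rule shift_preserving_Un)
    show "shift_preserving (PiM ({..<T} \<times> A) (\<lambda>_. gaussian R)) R ({..<n} \<times> A) (selected S) c"
      using Suc unfolding P_def by simp
    show "shift_preserving (PiM ({..<T} \<times> A) (\<lambda>_. gaussian R)) R ({n} \<times> A) (selected S) c"
      using shift_preserving_round[OF R A S_adapt S_meas[unfolded P_def]] Suc.prems by simp
    show "selected S p (cond_shift ({n} \<times> A) (selected S) c \<eta>) = selected S p \<eta>"
      if "p \<in> {..<n} \<times> A" for p \<eta>
    proof -
      have "S (cond_shift ({n} \<times> A) (selected S) c \<eta>) (fst p) = S \<eta> (fst p)"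
        by (rule S_adapt) (use that in auto)
      then show ?thesis
        unfolding selected_def by simp
    qed
    show "{\<eta> \<in> space (PiM ({..<T} \<times> A) (\<lambda>_. gaussian R)). selected S p \<eta>}
        \<in> sets (PiM ({..<T} \<times> A) (\<lambda>_. gaussian R))" if "p \<in> {..<n} \<times> A" for p
      using sets_selected[where S=S and t="fst p" and M=P and i="snd p"] S_meas[of "fst p"] that Suc.prems
      unfolding P_def by auto
  qed (use A Suc.prems in auto)
  moreover have "{..<Suc n} \<times> A = {..<n} \<times> A \<union> {n} \<times> A"
    by auto
  ultimately show ?case
    by simp
qed

lemma shift_lr_square:
  assumes R: "R > 0" and J: "finite J" and c: "\<And>x. x \<in> J \<Longrightarrow> (c x)\<^sup>2 = D"
  shows "(shift_lr R J b c \<eta>)\<^sup>2 = shift_lr R J b (\<lambda>x. 2 * c x) \<eta> * exp (D / R\<^sup>2) ^ card {x \<in> J. b x \<eta>}"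
proof -
  have "(shift_lr R J b c \<eta>)\<^sup>2
      = (\<Prod>x\<in>J. (if b x \<eta> then gauss_ratio R (2 * c x) (\<eta> x) else 1) * (if b x \<eta> then exp (D / R\<^sup>2) else 1))"
    unfolding shift_lr_def prod_power_distrib using c by (intro prod.cong) (auto simp: gauss_ratio_square[OF R])
  also have "\<dots> = shift_lr R J b (\<lambda>x. 2 * c x) \<eta> * (\<Prod>x\<in>{x \<in> J. b x \<eta>}. exp (D / R\<^sup>2))"
    unfolding shift_lr_def prod.distrib prod.inter_filter[OF J] ..
  finally show ?thesis
    by simp
qed

lemma nn_integral_shift_lr_square:
  assumes P: "prob_space P" and pres: "shift_preserving P R J b (\<lambda>x. 2 * c x)"
    and R: "R > 0" and J: "finite J" and c: "\<And>x. x \<in> J \<Longrightarrow> (c x)\<^sup>2 = D"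
    and card: "\<And>\<eta>. \<eta> \<in> space P \<Longrightarrow> card {x \<in> J. b x \<eta>} = m"
    and lr_meas: "shift_lr R J b (\<lambda>x. 2 * c x) \<in> borel_measurable P"
  shows "(\<integral>\<^sup>+\<eta>. ennreal ((shift_lr R J b c \<eta>)\<^sup>2) \<partial>P) = ennreal (exp (D / R\<^sup>2) ^ m)"
proof -
  have lr_integral: "(\<integral>\<^sup>+\<eta>. ennreal (shift_lr R J b (\<lambda>x. 2 * c x) \<eta>) \<partial>P) = 1"
    using pres prob_space.emeasure_space_1[OF P] unfolding shift_preserving_def
    by (auto dest: bspec[of _ _ "\<lambda>_. 1"])
  have "(\<integral>\<^sup>+\<eta>. ennreal ((shift_lr R J b c \<eta>)\<^sup>2) \<partial>P)
      = (\<integral>\<^sup>+\<eta>. ennreal (exp (D / R\<^sup>2) ^ m) * ennreal (shift_lr R J b (\<lambda>x. 2 * c x) \<eta>) \<partial>P)"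
    by (rule nn_integral_cong)
      (simp add: shift_lr_square[OF R J c] card ennreal_mult'[symmetric] shift_lr_pos less_imp_le mult.commute)
  also have "\<dots> = ennreal (exp (D / R\<^sup>2) ^ m)"
    using lr_meas lr_integral by (simp add: nn_integral_cmult)
  finally show ?thesis .
qed

lemma integral_le_by_shift:
  assumes P: "prob_space P" and pres: "shift_preserving P R J b c"
    and lr_meas: "shift_lr R J b c \<in> borel_measurable P"
    and E: "E > 0" and lr_square: "(\<integral>\<^sup>+\<eta>. ennreal ((shift_lr R J b c \<eta>)\<^sup>2) \<partial>P) = ennreal E"
    and f: "f \<in> borel_measurable P" "\<And>\<eta>. 0 \<le> f \<eta>" "\<And>\<eta>. f \<eta> \<le> 1"
    and g: "g \<in> borel_measurable P" "\<And>\<eta>. 0 \<le> g \<eta>" "\<And>\<eta>. g \<eta> \<le> 1"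
    and coupling: "\<And>\<eta>. f (cond_shift J b c \<eta>) = g \<eta>"
  shows "(\<integral>\<eta>. f \<eta> \<partial>P) \<le> E / 2 * (\<integral>\<eta>. g \<eta> \<partial>P) + 1 / 2"
proof -
  interpret prob_space P by (rule P)
  let ?L = "shift_lr R J b c"
  have g_nonneg: "0 \<le> (\<integral>\<eta>. g \<eta> \<partial>P)"
    by (simp add: g(2))
  have "ennreal (\<integral>\<eta>. f \<eta> \<partial>P) = (\<integral>\<^sup>+\<eta>. ennreal (f \<eta>) \<partial>P)"
    using nn_integral_eq_integral_bounded[OF f] by simp
  also have "\<dots> = (\<integral>\<^sup>+\<eta>. ennreal (f (cond_shift J b c \<eta>)) * ennreal (?L \<eta>) \<partial>P)"
    using pres f(1) unfolding shift_preserving_def by (auto dest: bspec[of _ _ "\<lambda>\<eta>. ennreal (f \<eta>)"])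
  also have "\<dots> = (\<integral>\<^sup>+\<eta>. ennreal (g \<eta> * ?L \<eta>) \<partial>P)"
    by (simp add: coupling ennreal_mult g(2) shift_lr_pos less_imp_le)
  also have "\<dots> \<le> (\<integral>\<^sup>+\<eta>. ennreal (E / 2) * ennreal (g \<eta>) + ennreal (1 / (2 * E)) * ennreal ((?L \<eta>)\<^sup>2) \<partial>P)"
    \<comment> \<open>AM-GM; the second moment of the likelihood ratio then contributes exactly \<open>1 / 2\<close>\<close>
    using E g(2) mult_le_amgm_unit[OF g(2,3) E]
    by (intro nn_integral_mono)
      (simp add: ennreal_mult'[symmetric] ennreal_plus[symmetric] del: ennreal_plus)
  also have "\<dots> = ennreal (E / 2) * (\<integral>\<^sup>+\<eta>. ennreal (g \<eta>) \<partial>P) + ennreal (1 / (2 * E)) * ennreal E"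
    using g(1) lr_meas lr_square by (simp add: nn_integral_add nn_integral_cmult)
  also have "\<dots> = ennreal (E / 2 * (\<integral>\<eta>. g \<eta> \<partial>P) + 1 / 2)"
    using nn_integral_eq_integral_bounded[OF g] E g_nonneg
    by (subst ennreal_plus) (auto simp: ennreal_mult'[symmetric])
  finally show ?thesis
    using E g_nonneg by (subst (asm) ennreal_le_iff) auto
qed

lemma integral_le_by_adaptive_gaussian_shift:
  fixes T k :: nat and A :: "'a set" and R :: real and S :: "(nat \<times> 'a \<Rightarrow> real) \<Rightarrow> nat \<Rightarrow> 'a set"
  defines "P \<equiv> PiM ({..<T} \<times> A) (\<lambda>_. gaussian R)"
  assumes R: "R > 0" and A: "finite A"
    and S_adapt: "\<And>t \<eta> \<eta>'. (\<And>s i. s < t \<Longrightarrow> \<eta> (s, i) = \<eta>' (s, i)) \<Longrightarrow> S \<eta> t = S \<eta>' t"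
    and S_meas: "\<And>t. t < T \<Longrightarrow> (\<lambda>\<eta>. S \<eta> t) \<in> measurable P (count_space UNIV)"
    and S_card: "\<And>\<eta> t. t < T \<Longrightarrow> S \<eta> t \<subseteq> A \<and> card (S \<eta> t) = k"
    and c: "\<And>t i. t < T \<Longrightarrow> i \<in> A \<Longrightarrow> (c (t, i))\<^sup>2 = D"
    and f: "f \<in> borel_measurable P" "\<And>\<eta>. 0 \<le> f \<eta>" "\<And>\<eta>. f \<eta> \<le> 1"
    and g: "g \<in> borel_measurable P" "\<And>\<eta>. 0 \<le> g \<eta>" "\<And>\<eta>. g \<eta> \<le> 1"
    and coupling: "\<And>\<eta>. f (cond_shift ({..<T} \<times> A) (selected S) c \<eta>) = g \<eta>"
  shows "(\<integral>\<eta>. f \<eta> \<partial>P) \<le> exp (D / R\<^sup>2) ^ (k * T) / 2 * (\<integral>\<eta>. g \<eta> \<partial>P) + 1 / 2"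
proof -
  have P: "prob_space P"
    unfolding P_def by (rule prob_space_PiM_gaussian[OF R])
  have pres: "shift_preserving P R ({..<T} \<times> A) (selected S) c'" for c'
    unfolding P_def by (rule shift_preserving_adaptive[OF R A S_adapt S_meas[unfolded P_def] order_refl])
  have lr_meas: "shift_lr R ({..<T} \<times> A) (selected S) c' \<in> borel_measurable P" for c'
    unfolding P_def
  proof (rule borel_measurable_shift_lr)
    show "{\<eta> \<in> space (PiM ({..<T} \<times> A) (\<lambda>_. gaussian R)). selected S p \<eta>}
        \<in> sets (PiM ({..<T} \<times> A) (\<lambda>_. gaussian R))" if "p \<in> {..<T} \<times> A" for p
      using sets_selected[where S=S and t="fst p" and M=P and i="snd p"] S_meas[of "fst p"] that
      unfolding P_def by auto
  qed simp
  have card: "card {p \<in> {..<T} \<times> A. selected S p \<eta>} = k * T" for \<eta>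
  proof -
    have "{p \<in> {..<T} \<times> A. selected S p \<eta>} = Sigma {..<T} (S \<eta>)"
      using S_card by (auto simp: selected_def)
    moreover have "finite (S \<eta> t)" if "t < T" for t
      using S_card[OF that] A finite_subset by blast
    ultimately show ?thesis
      using S_card by simp
  qed
  have "(\<integral>\<^sup>+\<eta>. ennreal ((shift_lr R ({..<T} \<times> A) (selected S) c \<eta>)\<^sup>2) \<partial>P)
      = ennreal (exp (D / R\<^sup>2) ^ (k * T))"
    by (rule nn_integral_shift_lr_square[OF P pres R _ _ card lr_meas]) (use A c in auto)
  then show ?thesis
    by (intro integral_le_by_shift[OF P pres lr_meas _ _ f g coupling]) simp_all
qed

section \<open>Histories\<close>

lemma hist_cong_past:
  "(\<And>s i. s < t \<Longrightarrow> \<eta> (s, i) = \<eta>' (s, i)) \<Longrightarrow> hist \<pi> \<theta> d x u \<eta> t = hist \<pi> \<theta> d x u \<eta>' t"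
  by (induction t) (simp_all add: Let_def fun_eq_iff)

lemma chosen_cong_past:
  "(\<And>s i. s < t \<Longrightarrow> \<eta> (s, i) = \<eta>' (s, i)) \<Longrightarrow> chosen \<pi> \<theta> d x u \<eta> t = chosen \<pi> \<theta> d x u \<eta>' t"
  unfolding chosen_def by (metis hist_cong_past)

lemma hist_shift_coupling:
  assumes sub: "\<And>t \<eta>. t < T \<Longrightarrow> chosen \<pi> \<theta>' d x u \<eta> t \<subseteq> A" and "t \<le> T"
  shows "hist \<pi> \<theta> d x u (cond_shift ({..<T} \<times> A) (selected (chosen \<pi> \<theta>' d x u))
           (\<lambda>(t, i). mean_reward \<theta> d x t i - mean_reward \<theta>' d x t i) \<eta>) t
       = hist \<pi> \<theta>' d x u \<eta> t"
  using \<open>t \<le> T\<close>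
proof (induction t)
  case 0
  then show ?case by simp
next
  case (Suc t)
  let ?\<eta> = "cond_shift ({..<T} \<times> A) (selected (chosen \<pi> \<theta>' d x u))
              (\<lambda>(t, i). mean_reward \<theta> d x t i - mean_reward \<theta>' d x t i) \<eta>"
  have IH: "hist \<pi> \<theta> d x u ?\<eta> t = hist \<pi> \<theta>' d x u \<eta> t"
    using Suc by simp
  have "?\<eta> (t, i) = \<eta> (t, i) - (mean_reward \<theta> d x t i - mean_reward \<theta>' d x t i)"
    if "i \<in> chosen \<pi> \<theta>' d x u \<eta> t" for i
    using that sub[of t \<eta>] Suc.prems by (auto simp: cond_shift_def selected_def)
  then have "(\<lambda>i. if i \<in> chosen \<pi> \<theta>' d x u \<eta> t then mean_reward \<theta> d x t i + ?\<eta> (t, i) else 0)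
      = (\<lambda>i. if i \<in> chosen \<pi> \<theta>' d x u \<eta> t then mean_reward \<theta>' d x t i + \<eta> (t, i) else 0)"
    by auto
  then show ?case
    using IH by (simp add: Let_def chosen_def[symmetric])
qed

section \<open>The hard instance\<close>

locale cube_bandit =
  fixes R :: real and d k T :: nat and x :: "nat \<Rightarrow> nat \<Rightarrow> nat \<Rightarrow> real"
    and U :: "real measure" and \<pi> :: "real \<Rightarrow> nat \<Rightarrow> history \<Rightarrow> nat set"
  assumes R_pos: "R > 0" and k_pos: "k > 0" and T_pos: "T > 0"
    and features: "inst_features d k T x"
    and prob_space_U: "prob_space U"
    and policy_feasible: "\<And>u t h. \<pi> u t h \<in> feasible (k * 2 ^ d) k"
    and measurable_chosen_sample: "\<And>\<theta> t. \<theta> \<in> Theta R d k T \<Longrightarrow> t < T \<Longrightarrow>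
       (\<lambda>\<omega>. chosen \<pi> \<theta> d x (fst \<omega>) (snd \<omega>) t) \<in> measurable (sample_space U R T (k * 2 ^ d)) (count_space UNIV)"
begin

abbreviation "N \<equiv> k * 2 ^ d"
abbreviation "P \<equiv> PiM ({..<T} \<times> {..<N}) (\<lambda>_. gaussian R)"
abbreviation "\<Theta> \<equiv> Theta R d k T"

definition "\<Delta> = R / sqrt (real k * real T)"

lemma Delta_pos: "\<Delta> > 0"
  unfolding \<Delta>_def using R_pos k_pos T_pos by simp

lemma Delta_square: "\<Delta>\<^sup>2 * (real k * real T) = R\<^sup>2"
  unfolding \<Delta>_def using k_pos T_pos by (simp add: power_divide)

lemma Delta_mult: "\<Delta> * (real k * real T) = R * sqrt (real k * real T)"
proof -
  have "real k * real T / sqrt (real k * real T) = sqrt (real k * real T)"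
    by (rule real_div_sqrt) simp
  then show ?thesis
    unfolding \<Delta>_def by (metis times_divide_eq_left times_divide_eq_right)
qed

lemma sample_space_eq: "sample_space U R T N = U \<Otimes>\<^sub>M P"
  unfolding sample_space_def gaussian_def ..

lemma prob_space_P: "prob_space P"
  by (rule prob_space_PiM_gaussian[OF R_pos])

lemma pair_prob_space_UP: "pair_prob_space U P"
  by (intro pair_prob_space.intro pair_sigma_finite.intro prob_space_imp_sigma_finite
      prob_space_U prob_space_P)

lemma feature_in_cube:
  assumes "t < T" "i < N"
  shows "x t i \<in> cube d"
proof -
  have "i div 2 ^ d < k"
    using assms(2) by (simp add: less_mult_imp_div_less)
  then have "bij_betw (\<lambda>j. x t (i div 2 ^ d * 2 ^ d + j)) {..<2 ^ d} (cube d)"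
    using features assms(1) unfolding inst_features_def by blast
  then have "x t (i div 2 ^ d * 2 ^ d + i mod 2 ^ d) \<in> cube d"
    by (rule bij_betw_apply) simp
  then show ?thesis
    unfolding div_mult_mod_eq .
qed

lemma feature_sign:
  assumes "t < T" "i < N" "j < d"
  shows "x t i j = 1 \<or> x t i j = -1"
  using feature_in_cube[OF assms(1,2)] assms(3) unfolding cube_def by auto

lemma chosen_feasible: "chosen \<pi> \<theta> d x u \<eta> t \<in> feasible N k"
  unfolding chosen_def by (rule policy_feasible)

lemma chosen_subset: "chosen \<pi> \<theta> d x u \<eta> t \<subseteq> {..<N}"
  and card_chosen: "card (chosen \<pi> \<theta> d x u \<eta> t) = k"
  using chosen_feasible unfolding feasible_def by simp_all

lemma finite_chosen: "finite (chosen \<pi> \<theta> d x u \<eta> t)"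
  using finite_subset[OF chosen_subset] by simp

lemma Theta_coord: "\<theta> \<in> \<Theta> \<Longrightarrow> j < d \<Longrightarrow> \<theta> j = \<Delta> \<or> \<theta> j = - \<Delta>"
  unfolding Theta_def \<Delta>_def by auto

lemma Theta_flip: "\<theta> \<in> \<Theta> \<Longrightarrow> \<theta>(j := - \<theta> j) \<in> \<Theta>"
  unfolding Theta_def by auto

lemma finite_Theta: "finite \<Theta>"
proof (rule finite_subset)
  show "\<Theta> \<subseteq> {\<theta>. \<forall>j. (j \<in> {..<d} \<longrightarrow> \<theta> j \<in> {\<Delta>, - \<Delta>}) \<and> (j \<notin> {..<d} \<longrightarrow> \<theta> j = 0)}"
    unfolding Theta_def \<Delta>_def by auto
qed (rule finite_set_of_finite_funs; simp)

lemma Theta_nonempty: "\<Theta> \<noteq> {}"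
proof -
  have "(\<lambda>j. if j < d then \<Delta> else 0) \<in> \<Theta>"
    unfolding Theta_def \<Delta>_def by simp
  then show ?thesis
    by blast
qed

lemma signed_feature:
  assumes "\<theta> \<in> \<Theta>" "t < T" "i < N" "j < d"
  shows "\<theta> j * x t i j = \<Delta> \<or> \<theta> j * x t i j = - \<Delta>"
  using Theta_coord[OF assms(1,4)] feature_sign[OF assms(2-4)] by auto

lemma measurable_chosen:
  assumes "\<theta> \<in> \<Theta>" "t < T" "u \<in> space U"
  shows "(\<lambda>\<eta>. chosen \<pi> \<theta> d x u \<eta> t) \<in> measurable P (count_space UNIV)"
  using measurable_compose[OF measurable_Pair1'[OF assms(3)]
      measurable_chosen_sample[OF assms(1,2), unfolded sample_space_eq]]
  by simp

lemma mean_reward_flip_gap: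
  assumes \<theta>: "\<theta> \<in> \<Theta>" and j: "j < d" and t: "t < T" and i: "i < N"
  shows "(mean_reward \<theta> d x t i - mean_reward (\<theta>(j := - \<theta> j)) d x t i)\<^sup>2 = 4 * \<Delta>\<^sup>2"
proof -
  have "mean_reward \<theta> d x t i - mean_reward (\<theta>(j := - \<theta> j)) d x t i
      = (\<Sum>j'<d. if j' = j then 2 * (\<theta> j * x t i j) else 0)"
    unfolding mean_reward_def sum_subtractf[symmetric] by (rule sum.cong) auto
  also have "\<dots> = 2 * (\<theta> j * x t i j)"
    using j by simp
  finally have gap: "mean_reward \<theta> d x t i - mean_reward (\<theta>(j := - \<theta> j)) d x t i = 2 * (\<theta> j * x t i j)" .
  have "(\<theta> j * x t i j)\<^sup>2 = \<Delta>\<^sup>2"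
    using signed_feature[OF \<theta> t i j] by auto
  moreover have "(2 * y)\<^sup>2 = 4 * y\<^sup>2" for y :: real
    by (simp add: power2_eq_square)
  ultimately show ?thesis
    unfolding gap by simp
qed

lemma integral_chosen_le_flip:
  fixes G :: "nat set \<Rightarrow> real"
  assumes \<theta>: "\<theta> \<in> \<Theta>" and j: "j < d" and u: "u \<in> space U" and t: "t < T"
    and G: "\<And>I. 0 \<le> G I" "\<And>I. G I \<le> 1"
  shows "(\<integral>\<eta>. G (chosen \<pi> \<theta> d x u \<eta> t) \<partial>P)
      \<le> exp 4 / 2 * (\<integral>\<eta>. G (chosen \<pi> (\<theta>(j := - \<theta> j)) d x u \<eta> t) \<partial>P) + 1 / 2"
proof -
  define \<theta>' where "\<theta>' = \<theta>(j := - \<theta> j)"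
  have \<theta>': "\<theta>' \<in> \<Theta>"
    unfolding \<theta>'_def by (rule Theta_flip[OF \<theta>])
  have G_meas: "(\<lambda>\<eta>. G (chosen \<pi> \<phi> d x u \<eta> t)) \<in> borel_measurable P" if "\<phi> \<in> \<Theta>" for \<phi>
    using measurable_compose[OF measurable_chosen[OF that t u], of G] by simp
  have "(\<integral>\<eta>. G (chosen \<pi> \<theta> d x u \<eta> t) \<partial>P)
      \<le> exp (4 * \<Delta>\<^sup>2 / R\<^sup>2) ^ (k * T) / 2 * (\<integral>\<eta>. G (chosen \<pi> \<theta>' d x u \<eta> t) \<partial>P) + 1 / 2"
  proof (rule integral_le_by_adaptive_gaussian_shift[OF R_pos, where A="{..<N}"
        and S="chosen \<pi> \<theta>' d x u" and c="\<lambda>(t, i). mean_reward \<theta> d x t i - mean_reward \<theta>' d x t i"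
        and f="\<lambda>\<eta>. G (chosen \<pi> \<theta> d x u \<eta> t)" and g="\<lambda>\<eta>. G (chosen \<pi> \<theta>' d x u \<eta> t)"])
    show "chosen \<pi> \<theta>' d x u \<eta> s = chosen \<pi> \<theta>' d x u \<eta>' s"
      if "\<And>r i. r < s \<Longrightarrow> \<eta> (r, i) = \<eta>' (r, i)" for s \<eta> \<eta>'
      using that by (rule chosen_cong_past)
    show "(\<lambda>\<eta>. chosen \<pi> \<theta>' d x u \<eta> s) \<in> measurable P (count_space UNIV)" if "s < T" for s
      by (rule measurable_chosen[OF \<theta>' that u])
    show "chosen \<pi> \<theta>' d x u \<eta> s \<subseteq> {..<N} \<and> card (chosen \<pi> \<theta>' d x u \<eta> s) = k" for \<eta> s
      using chosen_subset card_chosen by blast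
    show "((\<lambda>(t, i). mean_reward \<theta> d x t i - mean_reward \<theta>' d x t i) (s, i))\<^sup>2 = 4 * \<Delta>\<^sup>2"
      if "s < T" "i \<in> {..<N}" for s i
      using mean_reward_flip_gap[OF \<theta> j] that unfolding \<theta>'_def by simp
    show "G (chosen \<pi> \<theta> d x u (cond_shift ({..<T} \<times> {..<N}) (selected (chosen \<pi> \<theta>' d x u))
          (\<lambda>(t, i). mean_reward \<theta> d x t i - mean_reward \<theta>' d x t i) \<eta>) t) = G (chosen \<pi> \<theta>' d x u \<eta> t)"
      for \<eta>
      using hist_shift_coupling[of T \<pi> \<theta>' d x u "{..<N}" t \<theta>] chosen_subset t
      unfolding chosen_def by simp
  qed (use G G_meas \<theta> \<theta>' in simp_all)
  also have "exp (4 * \<Delta>\<^sup>2 / R\<^sup>2) ^ (k * T) = exp 4"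
    using Delta_square R_pos by (simp add: exp_of_nat_mult[symmetric] field_simps)
  finally show ?thesis
    unfolding \<theta>'_def .
qed

definition wrong_count :: "(nat \<Rightarrow> real) \<Rightarrow> nat \<Rightarrow> nat \<Rightarrow> nat set \<Rightarrow> real" where
  "wrong_count \<theta> t j I = real (card {i \<in> I. \<theta> j * x t i j < 0})"

lemma wrong_count_nonneg: "0 \<le> wrong_count \<theta> t j I"
  unfolding wrong_count_def by simp

lemma wrong_count_le_card: "finite I \<Longrightarrow> wrong_count \<theta> t j I \<le> real (card I)"
  unfolding wrong_count_def by (simp add: card_mono)

lemma wrong_count_flip:
  assumes \<theta>: "\<theta> \<in> \<Theta>" and j: "j < d" and t: "t < T" and I: "I \<subseteq> {..<N}"
  shows "wrong_count (\<theta>(j := - \<theta> j)) t j I = real (card I) - wrong_count \<theta> t j I"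
proof -
  have fin: "finite I"
    using finite_subset[OF I] by simp
  have "{i \<in> I. (\<theta>(j := - \<theta> j)) j * x t i j < 0} = I - {i \<in> I. \<theta> j * x t i j < 0}"
    using signed_feature[OF \<theta> t _ j] I Delta_pos by force
  then show ?thesis
    using fin wrong_count_le_card[OF fin, of \<theta> t j]
    by (simp add: wrong_count_def card_Diff_subset of_nat_diff card_mono)
qed

lemma reward_eq_wrong_counts:
  assumes \<theta>: "\<theta> \<in> \<Theta>" and t: "t < T" and I: "I \<subseteq> {..<N}"
  shows "(\<Sum>i\<in>I. mean_reward \<theta> d x t i) = real (card I) * real d * \<Delta> - (\<Sum>j<d. 2 * \<Delta> * wrong_count \<theta> t j I)"
proof -
  have fin: "finite I"
    using finite_subset[OF I] by simp
  have "\<Delta> - \<theta> j * x t i j = (if \<theta> j * x t i j < 0 then 2 * \<Delta> else 0)" if "i \<in> I" "j < d" for i j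
  proof -
    have "i < N"
      using that(1) I by auto
    then show ?thesis
      using signed_feature[OF \<theta> t \<open>i < N\<close> that(2)] Delta_pos by auto
  qed
  then have "(\<Sum>i\<in>I. \<Delta> - \<theta> j * x t i j) = 2 * \<Delta> * wrong_count \<theta> t j I" if "j < d" for j
    using that fin by (simp add: sum.If_cases wrong_count_def Int_def)
  then have "(\<Sum>j<d. \<Sum>i\<in>I. \<Delta> - \<theta> j * x t i j) = (\<Sum>j<d. 2 * \<Delta> * wrong_count \<theta> t j I)"
    by simp
  then have "real (card I) * real d * \<Delta> - (\<Sum>i\<in>I. mean_reward \<theta> d x t i)
      = (\<Sum>j<d. 2 * \<Delta> * wrong_count \<theta> t j I)"
    unfolding mean_reward_def by (simp add: sum.swap[of _ I] sum_subtractf mult_ac)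
  then show ?thesis
    by simp
qed

lemma arm_with_feature:
  assumes t: "t < T" and s: "s < k" and v: "v \<in> cube d"
  shows "\<exists>i<N. i div 2 ^ d = s \<and> x t i = v"
proof -
  have "bij_betw (\<lambda>r. x t (s * 2 ^ d + r)) {..<2 ^ d} (cube d)"
    using features t s unfolding inst_features_def by blast
  then have "v \<in> (\<lambda>r. x t (s * 2 ^ d + r)) ` {..<2 ^ d}"
    using v unfolding bij_betw_def by simp
  then obtain r where r: "r < 2 ^ d" "x t (s * 2 ^ d + r) = v"
    by auto
  have "s * 2 ^ d + r < (s + 1) * 2 ^ d"
    using r(1) by simp
  also have "\<dots> \<le> N"
    using s by (intro mult_right_mono) auto
  finally show ?thesis
    using r by (intro exI[of _ "s * 2 ^ d + r"]) simp
qed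

lemma exists_feasible_without_wrong_signs:
  assumes \<theta>: "\<theta> \<in> \<Theta>" and t: "t < T"
  shows "\<exists>I\<in>feasible N k. \<forall>j<d. wrong_count \<theta> t j I = 0"
proof -
  define v where "v j = (if j < d then sgn (\<theta> j) else 0)" for j
  have "sgn (\<theta> j) = 1 \<or> sgn (\<theta> j) = -1" if "j < d" for j
    using Theta_coord[OF \<theta> that] Delta_pos by auto
  then have "v \<in> cube d"
    unfolding v_def cube_def by auto
  then have "\<exists>i<N. i div 2 ^ d = s \<and> x t i = v" if "s \<in> {..<k}" for s
    using arm_with_feature[OF t] that by simp
  then obtain arm where arm: "\<And>s. s \<in> {..<k} \<Longrightarrow> arm s < N \<and> arm s div 2 ^ d = s \<and> x t (arm s) = v"
    by metis
  let ?I = "arm ` {..<k}"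
  have "inj_on arm {..<k}"
    by (rule inj_on_inverseI[where g="\<lambda>i. i div 2 ^ d"]) (use arm in blast)
  moreover have "?I \<subseteq> {..<N}"
    using arm by blast
  ultimately have "?I \<in> feasible N k"
    unfolding feasible_def by (simp add: card_image)
  moreover have "wrong_count \<theta> t j ?I = 0" if "j < d" for j
  proof -
    have "\<theta> j * sgn (\<theta> j) > 0"
      using Theta_coord[OF \<theta> that] Delta_pos by auto
    then have "{i \<in> ?I. \<theta> j * x t i j < 0} = {}"
      using arm that unfolding v_def by fastforce
    then show ?thesis
      unfolding wrong_count_def by simp
  qed
  ultimately show ?thesis
    by blast
qed

lemma optimal_reward_ge:
  assumes \<theta>: "\<theta> \<in> \<Theta>" and t: "t < T"
  shows "real k * real d * \<Delta> \<le> Max ((\<lambda>I. \<Sum>i\<in>I. mean_reward \<theta> d x t i) ` feasible N k)"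
proof -
  obtain I where I: "I \<in> feasible N k" "\<forall>j<d. wrong_count \<theta> t j I = 0"
    using exists_feasible_without_wrong_signs[OF \<theta> t] by blast
  have fin: "finite (feasible N k)"
    by (rule finite_subset[of _ "Pow {..<N}"]) (auto simp: feasible_def)
  have "(\<Sum>i\<in>I. mean_reward \<theta> d x t i) = real k * real d * \<Delta>"
    using reward_eq_wrong_counts[OF \<theta> t, of I] I unfolding feasible_def by simp
  moreover have "(\<Sum>i\<in>I. mean_reward \<theta> d x t i) \<le> Max ((\<lambda>I. \<Sum>i\<in>I. mean_reward \<theta> d x t i) ` feasible N k)"
    by (rule Max_ge[OF finite_imageI[OF fin] imageI[OF I(1)]])
  ultimately show ?thesis
    by simp
qed

lemma regret_eq_wrong_counts:
  assumes \<theta>: "\<theta> \<in> \<Theta>"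
  shows "regret \<pi> \<theta> d k x u \<eta> T
    = (\<Sum>t<T. Max ((\<lambda>I. \<Sum>i\<in>I. mean_reward \<theta> d x t i) ` feasible N k) - real k * real d * \<Delta>)
      + (\<Sum>t<T. \<Sum>j<d. 2 * \<Delta> * wrong_count \<theta> t j (chosen \<pi> \<theta> d x u \<eta> t))"
proof -
  have "regret \<pi> \<theta> d k x u \<eta> T
    = (\<Sum>t<T. (Max ((\<lambda>I. \<Sum>i\<in>I. mean_reward \<theta> d x t i) ` feasible N k) - real k * real d * \<Delta>)
        + (\<Sum>j<d. 2 * \<Delta> * wrong_count \<theta> t j (chosen \<pi> \<theta> d x u \<eta> t)))"
    unfolding regret_def
    using reward_eq_wrong_counts[OF \<theta> _ chosen_subset] card_chosen by (intro sum.cong) auto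
  then show ?thesis
    by (simp add: sum.distrib)
qed

definition expected_wrong_count :: "(nat \<Rightarrow> real) \<Rightarrow> nat \<Rightarrow> nat \<Rightarrow> real" where
  "expected_wrong_count \<theta> t j = (\<integral>\<omega>. wrong_count \<theta> t j (chosen \<pi> \<theta> d x (fst \<omega>) (snd \<omega>) t) \<partial>(U \<Otimes>\<^sub>M P))"

lemma integrable_wrong_count:
  assumes "\<theta> \<in> \<Theta>" "t < T"
  shows "integrable (U \<Otimes>\<^sub>M P) (\<lambda>\<omega>. wrong_count \<theta> t j (chosen \<pi> \<theta> d x (fst \<omega>) (snd \<omega>) t))"
proof (rule prob_space.nn_integral_eq_integral_bounded(1)[where B="real k"])
  show "prob_space (U \<Otimes>\<^sub>M P)"
    by (rule prob_space_pair[OF prob_space_U prob_space_P])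
  show "(\<lambda>\<omega>. wrong_count \<theta> t j (chosen \<pi> \<theta> d x (fst \<omega>) (snd \<omega>) t)) \<in> borel_measurable (U \<Otimes>\<^sub>M P)"
    using measurable_compose[OF measurable_chosen_sample[OF assms, unfolded sample_space_eq],
        of "wrong_count \<theta> t j"] by simp
  show "wrong_count \<theta> t j (chosen \<pi> \<theta> d x (fst \<omega>) (snd \<omega>) t) \<le> real k" for \<omega>
    using wrong_count_le_card[OF finite_chosen] card_chosen by metis
qed (rule wrong_count_nonneg)

lemma expected_regret_ge:
  assumes \<theta>: "\<theta> \<in> \<Theta>"
  shows "(\<Sum>t<T. \<Sum>j<d. 2 * \<Delta> * expected_wrong_count \<theta> t j) \<le> expected_regret U R \<pi> \<theta> d k x T"
proof -
  interpret UP: prob_space "U \<Otimes>\<^sub>M P"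
    by (rule prob_space_pair[OF prob_space_U prob_space_P])
  have int: "integrable (U \<Otimes>\<^sub>M P) (\<lambda>\<omega>. 2 * \<Delta> * wrong_count \<theta> t j (chosen \<pi> \<theta> d x (fst \<omega>) (snd \<omega>) t))"
    if "t < T" for t j
    by (intro integrable_mult_right integrable_wrong_count[OF \<theta> that])
  have "integrable (U \<Otimes>\<^sub>M P)
      (\<lambda>\<omega>. \<Sum>t<T. \<Sum>j<d. 2 * \<Delta> * wrong_count \<theta> t j (chosen \<pi> \<theta> d x (fst \<omega>) (snd \<omega>) t))"
    by (intro Bochner_Integration.integrable_sum int) simp
  moreover have "(\<integral>\<omega>. (\<Sum>t<T. \<Sum>j<d. 2 * \<Delta> * wrong_count \<theta> t j (chosen \<pi> \<theta> d x (fst \<omega>) (snd \<omega>) t)) \<partial>(U \<Otimes>\<^sub>M P))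
      = (\<Sum>t<T. \<Sum>j<d. 2 * \<Delta> * expected_wrong_count \<theta> t j)"
    using int unfolding expected_wrong_count_def
    by (simp add: Bochner_Integration.integral_sum Bochner_Integration.integrable_sum)
  ultimately have "expected_regret U R \<pi> \<theta> d k x T
      = (\<Sum>t<T. Max ((\<lambda>I. \<Sum>i\<in>I. mean_reward \<theta> d x t i) ` feasible N k) - real k * real d * \<Delta>)
        + (\<Sum>t<T. \<Sum>j<d. 2 * \<Delta> * expected_wrong_count \<theta> t j)"
    unfolding expected_regret_def sample_space_eq regret_eq_wrong_counts[OF \<theta>]
    by (simp add: Bochner_Integration.integral_add UP.prob_space)
  moreover have "0 \<le> (\<Sum>t<T. Max ((\<lambda>I. \<Sum>i\<in>I. mean_reward \<theta> d x t i) ` feasible N k) - real k * real d * \<Delta>)"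
    using optimal_reward_ge[OF \<theta>] by (intro sum_nonneg) simp
  ultimately show ?thesis
    by simp
qed

lemma wrong_count_pair_given_seed:
  assumes \<theta>: "\<theta> \<in> \<Theta>" and j: "j < d" and t: "t < T" and u: "u \<in> space U"
  shows "real k / (2 * exp 4) \<le> (\<integral>\<eta>. wrong_count \<theta> t j (chosen \<pi> \<theta> d x u \<eta> t) \<partial>P)
           + (\<integral>\<eta>. wrong_count (\<theta>(j := - \<theta> j)) t j (chosen \<pi> (\<theta>(j := - \<theta> j)) d x u \<eta> t) \<partial>P)"
proof -
  interpret P: prob_space P
    by (rule prob_space_P)
  define \<theta>' where "\<theta>' = \<theta>(j := - \<theta> j)"
  have \<theta>': "\<theta>' \<in> \<Theta>"
    unfolding \<theta>'_def by (rule Theta_flip[OF \<theta>])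
  define G where "G I = wrong_count \<theta> t j I / real (card I)" for I
  have G: "0 \<le> G I" "G I \<le> 1" for I
    using wrong_count_le_card[of I \<theta> t j] card_eq_0_iff[of I]
    by (auto simp: G_def wrong_count_nonneg divide_le_eq_1)
  have G_meas: "(\<lambda>\<eta>. G (chosen \<pi> \<phi> d x u \<eta> t)) \<in> borel_measurable P" if "\<phi> \<in> \<Theta>" for \<phi>
    using measurable_compose[OF measurable_chosen[OF that t u], of G] by simp
  have G_int: "integrable P (\<lambda>\<eta>. G (chosen \<pi> \<phi> d x u \<eta> t))" if "\<phi> \<in> \<Theta>" for \<phi>
    by (rule P.nn_integral_eq_integral_bounded(1)[OF G_meas[OF that] G])
  let ?A = "\<integral>\<eta>. G (chosen \<pi> \<theta> d x u \<eta> t) \<partial>P" and ?B = "\<integral>\<eta>. G (chosen \<pi> \<theta>' d x u \<eta> t) \<partial>P"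
  have "0 \<le> ?A"
    by (simp add: G)
  moreover have "?B \<le> 1"
    using integral_mono[OF G_int[OF \<theta>'] P.integrable_const[of 1]] G P.prob_space by simp
  moreover have "?B \<le> exp 4 / 2 * ?A + 1 / 2"
    using integral_chosen_le_flip[OF \<theta>' j u t, of G] G unfolding \<theta>'_def by simp
  moreover have "(2 :: real) \<le> exp 4"
    using exp_ge_add_one_self[of 4] by simp
  ultimately have "1 / (2 * exp 4) \<le> ?A + (1 - ?B)"
    by (rule pair_error_lower_bound)
  moreover have "wrong_count \<theta> t j (chosen \<pi> \<theta> d x u \<eta> t) = real k * G (chosen \<pi> \<theta> d x u \<eta> t)" for \<eta>
    using k_pos by (simp add: G_def card_chosen)
  moreover have "wrong_count \<theta>' t j (chosen \<pi> \<theta>' d x u \<eta> t) = real k * (1 - G (chosen \<pi> \<theta>' d x u \<eta> t))" for \<eta>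
    using wrong_count_flip[OF \<theta> j t chosen_subset] k_pos unfolding \<theta>'_def
    by (simp add: G_def card_chosen right_diff_distrib)
  ultimately show ?thesis
    using G_int[OF \<theta>'] k_pos unfolding \<theta>'_def[symmetric]
    by (simp add: Bochner_Integration.integral_diff P.prob_space distrib_left[symmetric] right_diff_distrib[symmetric]
        divide_le_eq mult.commute)
qed

lemma expected_wrong_count_pair:
  assumes \<theta>: "\<theta> \<in> \<Theta>" and j: "j < d" and t: "t < T"
  shows "real k / (2 * exp 4) \<le> expected_wrong_count \<theta> t j + expected_wrong_count (\<theta>(j := - \<theta> j)) t j"
proof -
  interpret UP: pair_prob_space U P
    by (rule pair_prob_space_UP)
  have fubini: "expected_wrong_count \<phi> t j = (\<integral>u. \<integral>\<eta>. wrong_count \<phi> t j (chosen \<pi> \<phi> d x u \<eta> t) \<partial>P \<partial>U)"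
    and int: "integrable U (\<lambda>u. \<integral>\<eta>. wrong_count \<phi> t j (chosen \<pi> \<phi> d x u \<eta> t) \<partial>P)"
    if "\<phi> \<in> \<Theta>" for \<phi>
    using UP.integral_fst'[OF integrable_wrong_count[OF that t]] UP.integrable_fst'[OF integrable_wrong_count[OF that t]]
    unfolding expected_wrong_count_def by simp_all
  have "(\<integral>u. real k / (2 * exp 4) \<partial>U)
      \<le> (\<integral>u. (\<integral>\<eta>. wrong_count \<theta> t j (chosen \<pi> \<theta> d x u \<eta> t) \<partial>P)
            + (\<integral>\<eta>. wrong_count (\<theta>(j := - \<theta> j)) t j (chosen \<pi> (\<theta>(j := - \<theta> j)) d x u \<eta> t) \<partial>P) \<partial>U)"
    using int[OF \<theta>] int[OF Theta_flip[OF \<theta>]] wrong_count_pair_given_seed[OF \<theta> j t]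
    by (intro integral_mono) auto
  then show ?thesis
    using int[OF \<theta>] int[OF Theta_flip[OF \<theta>]] prob_space_U
    by (simp add: fubini[OF \<theta>] fubini[OF Theta_flip[OF \<theta>]] prob_space.prob_space)
qed

lemma exists_Theta_expected_regret_ge:
  "\<exists>\<theta>\<in>\<Theta>. 1 / (2 * exp 4) * R * real d * sqrt (real k * real T) \<le> expected_regret U R \<pi> \<theta> d k x T"
proof (rule exists_ge_of_sum_ge[OF finite_Theta Theta_nonempty])
  have flip_sum: "real (card \<Theta>) * (real k / (2 * exp 4)) \<le> 2 * (\<Sum>\<theta>\<in>\<Theta>. expected_wrong_count \<theta> t j)"
    if "t < T" "j < d" for t j
  proof (rule sum_ge_by_involution[OF finite_Theta, where \<sigma>="\<lambda>\<theta>. \<theta>(j := - \<theta> j)"])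
    show "\<theta>(j := - \<theta> j) \<in> \<Theta>" if "\<theta> \<in> \<Theta>" for \<theta>
      by (rule Theta_flip[OF that])
    show "real k / (2 * exp 4) \<le> expected_wrong_count \<theta> t j + expected_wrong_count (\<theta>(j := - \<theta> j)) t j"
      if "\<theta> \<in> \<Theta>" for \<theta>
      by (rule expected_wrong_count_pair[OF that \<open>j < d\<close> \<open>t < T\<close>])
  qed simp
  have "real (card \<Theta>) * (1 / (2 * exp 4) * R * real d * sqrt (real k * real T))
      = real (card \<Theta>) * real d * (\<Delta> * (real k * real T)) / (2 * exp 4)"
    by (simp add: Delta_mult)
  also have "\<dots> = (\<Sum>t<T. \<Sum>j<d. \<Delta> * (real (card \<Theta>) * (real k / (2 * exp 4))))"
    by simp
  also have "\<dots> \<le> (\<Sum>t<T. \<Sum>j<d. \<Delta> * (2 * (\<Sum>\<theta>\<in>\<Theta>. expected_wrong_count \<theta> t j)))"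
    using Delta_pos flip_sum by (intro sum_mono mult_left_mono) auto
  also have "\<dots> = (\<Sum>t<T. \<Sum>j<d. \<Sum>\<theta>\<in>\<Theta>. 2 * \<Delta> * expected_wrong_count \<theta> t j)"
    by (simp add: sum_distrib_left mult_ac)
  also have "\<dots> = (\<Sum>t<T. \<Sum>\<theta>\<in>\<Theta>. \<Sum>j<d. 2 * \<Delta> * expected_wrong_count \<theta> t j)"
    by (intro sum.cong refl sum.swap)
  also have "\<dots> = (\<Sum>\<theta>\<in>\<Theta>. \<Sum>t<T. \<Sum>j<d. 2 * \<Delta> * expected_wrong_count \<theta> t j)"
    by (rule sum.swap)
  also have "\<dots> \<le> (\<Sum>\<theta>\<in>\<Theta>. expected_regret U R \<pi> \<theta> d k x T)"
    by (intro sum_mono expected_regret_ge)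
  finally show "real (card \<Theta>) * (1 / (2 * exp 4) * R * real d * sqrt (real k * real T))
      \<le> (\<Sum>\<theta>\<in>\<Theta>. expected_regret U R \<pi> \<theta> d k x T)" .
qed

end

theorem theorem5:
  shows "\<exists>c>0. \<forall>R>0. \<forall>d k T :: nat. d > 0 \<longrightarrow> k > 0 \<longrightarrow> T > 0 \<longrightarrow>
     (\<forall>x. inst_features d k T x \<longrightarrow>
       (\<forall>(U :: real measure) \<pi>. prob_space U \<longrightarrow>
          (\<forall>u t h. \<pi> u t h \<in> feasible (k * 2^d) k) \<longrightarrow>
          (\<forall>\<theta>\<in>Theta R d k T. \<forall>t<T.
              (\<lambda>\<omega>. chosen \<pi> \<theta> d x (fst \<omega>) (snd \<omega>) t)
                \<in> measurable (sample_space U R T (k * 2^d)) (count_space UNIV)) \<longrightarrow>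
          (\<exists>\<theta>\<in>Theta R d k T.
              expected_regret U R \<pi> \<theta> d k x T \<ge> c * R * real d * sqrt (real k * real T))))"
proof (intro exI[of _ "1 / (2 * exp 4)"] conjI allI impI)
  show "(0 :: real) < 1 / (2 * exp 4)"
    by simp
  fix R :: real and d k T :: nat and x U and \<pi> :: "real \<Rightarrow> nat \<Rightarrow> history \<Rightarrow> nat set"
  assume "R > 0" "d > 0" "k > 0" "T > 0" "inst_features d k T x" "prob_space U"
    and policy_feasible: "\<forall>u t h. \<pi> u t h \<in> feasible (k * 2^d) k"
    and policy_measurable: "\<forall>\<theta>\<in>Theta R d k T. \<forall>t<T. (\<lambda>\<omega>. chosen \<pi> \<theta> d x (fst \<omega>) (snd \<omega>) t)
       \<in> measurable (sample_space U R T (k * 2^d)) (count_space UNIV)"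
  interpret cube_bandit R d k T x U \<pi>
  proof (rule cube_bandit.intro)
    show "\<pi> u t h \<in> feasible (k * 2 ^ d) k" for u t h
      using policy_feasible by blast
    show "(\<lambda>\<omega>. chosen \<pi> \<theta> d x (fst \<omega>) (snd \<omega>) t) \<in> measurable (sample_space U R T (k * 2 ^ d)) (count_space UNIV)"
      if "\<theta> \<in> Theta R d k T" "t < T" for \<theta> t
      using policy_measurable that by blast
  qed fact+
  show "\<exists>\<theta>\<in>Theta R d k T. expected_regret U R \<pi> \<theta> d k x T \<ge> 1 / (2 * exp 4) * R * real d * sqrt (real k * real T)"
    by (rule exists_Theta_expected_regret_ge)
qed
end
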